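(* Assume the setting in the context, with one of Conditions 1–4 fulfilled. Let $q\ge0$ and $r\ge-1$. Then for $0<\varepsilon\le1$, $$\bigl\| (\Psi^* - [\varphi_{k_0}]\Phi^* )\, [\varepsilon^{q} (|k-k_0|^2 + \varepsilon^2)^{-q/2} \chi_{\mathfrak K}(k-k_0)] \bigr\|_{L_2(\mathbb{R}) \to L_2(\mathbb{R})} \le C \varepsilon^{\min(1,q)},$$ $$\bigl\| (\Psi^* - [\varphi_{k_0}]\Phi^* )\, [\varepsilon^{r} (|k-k_0|^2 + \varepsilon^2)^{-r/2} |k-k_0|^{-1} \chi_{\mathfrak K}(k-k_0)] \bigr\|_{L_2(\mathbb{R}) \to L_2(\mathbb{R})} \le C \varepsilon^{\min(0,r)},$$ where the constant $C$ in the first estimate depends only on $q,\kappa,\|\theta_{k_0}\|_{M_\kappa(k_0)}$, and in the second only on $r,\kappa,\|\theta_{k_0}\|_{M_\kappa(k_0)}$.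
   Context: Let $\check g$ be a real-valued measurable $1$-periodic function on $\mathbb R$ with $0<\alpha_0\le\check g\le\alpha_1<\infty$, and let $\omega$ be a $1$-periodic function with $\|\omega\|_{L_2(0,1)}=1$ and $0<\beta_0\le\omega\le\beta_1<\infty$; put $g=\omega^2\check g$. Let $\widetilde H^1(0,1)$ be the set of $f\in H^1(0,1)$ whose $1$-periodic extension lies in $H^1_{\mathrm{loc}}(\mathbb R)$, and $\widetilde{\mathcal H}^1(0,1)=\{f:\omega^{-1}f\in\widetilde H^1(0,1)\}$. For $k\in\mathbb R$ let $A(k)$ be the selfadjoint operator in $L_2(0,1)$ generated by the form $\int_0^1 g|\phi'+ik\phi|^2dx$, $\phi=\omega^{-1}u\in\widetilde H^1(0,1)$; let $E_1(k)\le E_2(k)\le\dots$ be its eigenvalues counted with multiplicity and $\varphi_l(\cdot,k)$ corresponding normalized eigenfunctions, extended $1$-periodically in $x$ and chosen so that $e^{ikx}\varphi_l(x,k)$ is $2\pi$-periodic in $k$. Fix $s\in\mathbb N$ and write $E=E_s$, $\varphi=\varphi_s$. The four conditions (with the convention $E_0(0)=-\infty$): Condition 1: $s$ odd and the interval $(E_{s-1}(0),E(0))$ is nonempty; Condition 2: $s$ even and $(E(0),E_{s+1}(0))\neq\varnothing$; Condition 3: $s$ odd and $(E(\pi),E_{s+1}(\pi))\ne\varnothing$; Condition 4: $s$ even and $(E_{s-1}(\pi),E(\pi))\neq\varnothing$. Put $k_0=0$ under Conditions 1, 2 and $k_0=\pi$ under Conditions 3, 4. It is known that under Condition 1 or 2: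 $E(k)=\sigma_0\pm b_0k^2+k^4\gamma_0(k)$ for $|k|\le\pi$, with $b_0>0$, sign $+$ for Condition 1 and $-$ for Condition 2, $\sigma_0=E(0)$, $\gamma_0$ continuous and real-analytic on $|k|<\pi$, and $\varphi(x,k)=\varphi_0(x)+k\theta_0(x,k)$ for $|k|<\pi$, with $\varphi_0=\varphi(\cdot,0)$ and $\theta_0(\cdot,k)$ real-analytic in $k$ with values in $\widetilde{\mathcal H}^1(0,1)$; under Condition 3 or 4: $E(k)=\sigma_\pi\pm b_\pi(k-\pi)^2+(k-\pi)^4\gamma_\pi(k)$ for $0\le k\le2\pi$, with $b_\pi>0$, sign $+$ for Condition 4 and $-$ for Condition 3, $\sigma_\pi=E(\pi)$, $\gamma_\pi$ continuous and real-analytic on $(0,2\pi)$, and $\varphi(x,k)=\varphi_\pi(x)+(k-\pi)\theta_\pi(x,k)$ for $0<k<2\pi$, with $\varphi_\pi=\varphi(\cdot,\pi)$ and $\theta_\pi$ analogous. Standing assumption: $\gamma_{k_0}(k_0)\neq0$. Define $\tilde\gamma_{k_0}$ near $k_0$ by $(E(k)-\sigma_{k_0})^{1/2}=b_{k_0}^{1/2}|k-k_0|+|k-k_0|^3\tilde\gamma_{k_0}(k)$ under Conditions 1, 4 and $(\sigma_{k_0}-E(k))^{1/2}=b_{k_0}^{1/2}|k-k_0|-|k-k_0|^3\tilde\gamma_{k_0}(k)$ under Conditions 2, 3 (so $\tilde\gamma_{k_0}(k)\to\frac12 b_{k_0}^{-1/2}\gamma_{k_0}(k_0)$ as $k\to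 k_0$). Fix $0<\kappa<\pi$ such that for $|k-k_0|\le\kappa$: $\frac12|\gamma_{k_0}(k_0)|\le|\gamma_{k_0}(k)|\le\frac32|\gamma_{k_0}(k_0)|$, $\frac12|\tilde\gamma_{k_0}(k_0)|\le|\tilde\gamma_{k_0}(k)|\le\frac32|\tilde\gamma_{k_0}(k_0)|$, and $(k-k_0)^2|\tilde\gamma_{k_0}(k)|\le\frac12 b_{k_0}^{1/2}$. Put $\mathfrak K=\{k:|k|\le\kappa\}$ and $\|\theta_{k_0}\|_{M_\kappa(k_0)}=\operatorname{ess\,sup}_{x\in\mathbb R}\|\theta_{k_0}(x,\cdot)\|_{C^1[k_0-\kappa,k_0+\kappa]}<\infty$. $\Phi$ is the unitary Fourier transform on $L_2(\mathbb R)$, $(\Phi v)(k)=(2\pi)^{-1/2}\int e^{-ikx}v(x)dx$. $\Psi$ is the operator $(\Psi v)(k)=(2\pi)^{-1/2}\int_{\mathbb R}e^{-ikx}\overline{\varphi(x,k)}v(x)dx$ (extended by continuity); for $h\in L_2(\mathbb R)$ supported in $[k_0-\kappa,k_0+\kappa]$, $(\Psi^*h)(x)=(2\pi)^{-1/2}\int e^{ikx}\varphi(x,k)h(k)dk$. $[f]$ denotes multiplication by $f$, and $\chi_\delta$ the indicator of $\delta$. *)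

theory Defs
  imports "HOL-Analysis.Analysis"
begin

definition sq_int :: "(real \<Rightarrow> complex) \<Rightarrow> bool" where
  "sq_int u \<longleftrightarrow> u \<in> borel_measurable lborel \<and> integrable lborel (\<lambda>x. (cmod (u x))\<^sup>2)"

definition L2norm :: "(real \<Rightarrow> complex) \<Rightarrow> real" where
  "L2norm u = sqrt (LINT x|lborel. (cmod (u x))\<^sup>2)"

text \<open>Inverse unitary Fourier transform (integral formula, used on compactly supported L2 functions).\<close>
definition Phi_adj :: "(real \<Rightarrow> complex) \<Rightarrow> real \<Rightarrow> complex" where
  "Phi_adj h x = complex_of_real ((2*pi) powr (-1/2)) *
      (LINT k|lborel. exp (\<i> * complex_of_real (k*x)) * h k)"

definition Psi_adj :: "(real \<Rightarrow> real \<Rightarrow> complex) \<Rightarrow> (real \<Rightarrow> complex) \<Rightarrow> real \<Rightarrow> complex" where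
  "Psi_adj \<phi> h x = complex_of_real ((2*pi) powr (-1/2)) *
      (LINT k|lborel. exp (\<i> * complex_of_real (k*x)) * \<phi> x k * h k)"

definition diff_op :: "(real \<Rightarrow> real \<Rightarrow> complex) \<Rightarrow> (real \<Rightarrow> complex) \<Rightarrow> (real \<Rightarrow> complex) \<Rightarrow> real \<Rightarrow> complex" where
  "diff_op \<phi> \<phi>0 h x = Psi_adj \<phi> h x - \<phi>0 x * Phi_adj h x"

text \<open>||f||_{C^1[a,b]} = sup|f| + sup|f'| is at most M (f continuously differentiable on [a,b]).\<close>
definition c1_norm_le :: "(real \<Rightarrow> complex) \<Rightarrow> real \<Rightarrow> real \<Rightarrow> real \<Rightarrow> bool" where
  "c1_norm_le f a b M \<longleftrightarrow> (\<exists>f'. continuous_on {a..b} f' \<and>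
      (\<forall>k\<in>{a..b}. (f has_vector_derivative f' k) (at k within {a..b})) \<and>
      (\<forall>k\<in>{a..b}. \<forall>t\<in>{a..b}. cmod (f k) + cmod (f' t) \<le> M))"

text \<open>Data used from the setting: phi(x,k) = phi_k0(x) + (k-k0) theta(x,k) for |k-k0| <= kappa,
  with ||theta||_{M_kappa(k0)} <= M.\<close>
definition bloch_data :: "real \<Rightarrow> real \<Rightarrow> real \<Rightarrow> (real \<Rightarrow> real \<Rightarrow> complex) \<Rightarrow> (real \<Rightarrow> complex)
    \<Rightarrow> (real \<Rightarrow> real \<Rightarrow> complex) \<Rightarrow> bool" where
  "bloch_data k0 \<kappa> M \<phi> \<phi>0 \<theta> \<longleftrightarrow>
     (\<lambda>(x,k). \<phi> x k) \<in> borel_measurable (lborel \<Otimes>\<^sub>M lborel) \<and>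
     \<phi>0 \<in> borel_measurable lborel \<and>
     (\<lambda>(x,k). \<theta> x k) \<in> borel_measurable (lborel \<Otimes>\<^sub>M lborel) \<and>
     (\<forall>x k. \<bar>k - k0\<bar> \<le> \<kappa> \<longrightarrow> \<phi> x k = \<phi>0 x + complex_of_real (k - k0) * \<theta> x k) \<and>
     (AE x in lborel. c1_norm_le (\<theta> x) (k0 - \<kappa>) (k0 + \<kappa>) M)"

definition cut1 :: "real \<Rightarrow> real \<Rightarrow> real \<Rightarrow> real \<Rightarrow> real \<Rightarrow> real" where
  "cut1 q \<epsilon> k0 \<kappa> k = \<epsilon> powr q * ((k - k0)\<^sup>2 + \<epsilon>\<^sup>2) powr (-q/2) * indicator {t. \<bar>t\<bar> \<le> \<kappa>} (k - k0)"

definition cut2 :: "real \<Rightarrow> real \<Rightarrow> real \<Rightarrow> real \<Rightarrow> real \<Rightarrow> real" where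
  "cut2 r \<epsilon> k0 \<kappa> k = \<epsilon> powr r * ((k - k0)\<^sup>2 + \<epsilon>\<^sup>2) powr (-r/2) * inverse \<bar>k - k0\<bar>
      * indicator {t. \<bar>t\<bar> \<le> \<kappa>} (k - k0)"

end

theory Submission
  imports Defs "HOL-Probability.Probability"
begin

(* Inside the window |k - k0| <= kappa the Bloch eigenfunction splits as
   phi(x,k) = phi_k0(x) + (k - k0) theta(x,k).  Hence, for a multiplier w supported in the
   window, the operator Psi* - [phi_k0] Phi* sends h to the transform with kernel theta of
   (k - k0) w h.  Integrating by parts in k, using the C^1 bound M on theta, expresses that
   transform through Phi* of (k - k0) w h and of its truncations to half-lines [t, oo).
   The Plancherel inequality for Phi* (proved by damping with a Gaussian exp (-(x/R)^2/2),
   whose Fourier transform is a normal density, and letting R -> oo) then bounds the operator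
   norm by C(kappa) M sup |(k - k0) w(k)|.  For the two multipliers of the statement this
   supremum is at most (1 + kappa) eps^min(1,q), resp. (1 + kappa) eps^min(0,r). *)

section \<open>Bounded kernels and a Schur-type bound\<close>

lemma norm_integral_le_nn_integral:
  fixes f :: "'a \<Rightarrow> 'b::{banach, second_countable_topology}"
  shows "ennreal (norm (integral\<^sup>L M f)) \<le> (\<integral>\<^sup>+x. norm (f x) \<partial>M)"
  by (cases "integrable M f") (simp_all add: integral_norm_bound_ennreal not_integrable_integral_eq)

lemma integrable_bounded_kernel_pair:
  fixes E :: "real \<Rightarrow> real \<Rightarrow> complex" and f g :: "real \<Rightarrow> complex"
  assumes [measurable]: "(\<lambda>(x, k). E x k) \<in> borel_measurable (lborel \<Otimes>\<^sub>M lborel)"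
    and E: "\<And>x k. norm (E x k) \<le> 1" and f: "integrable lborel f" and g: "integrable lborel g"
  shows "integrable (lborel \<Otimes>\<^sub>M lborel) (\<lambda>(x, k). f x * (E x k * g k))"
proof (rule Bochner_Integration.integrable_bound)
  have [measurable]: "f \<in> borel_measurable borel" "g \<in> borel_measurable borel"
    using f g by auto
  show "integrable (lborel \<Otimes>\<^sub>M lborel) (\<lambda>(x, k). norm (f x) * norm (g k))"
    by (rule lborel_pair.Fubini_integrable) (use f g in auto)
  have "norm (f x * (E x k * g k)) \<le> norm (f x) * norm (g k)" for x k
    using mult_mono[OF E[of x k] order_refl, of "norm (g k)"]
    by (simp add: norm_mult mult_left_mono)
  then show "AE p in lborel \<Otimes>\<^sub>M lborel.
      norm (case p of (x, k) \<Rightarrow> f x * (E x k * g k))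
          \<le> norm (case p of (x, k) \<Rightarrow> norm (f x) * norm (g k))"
    by (intro AE_I2) (auto split: prod.split)
qed (use f g in auto)

lemma integrable_bounded_kernel:
  fixes E :: "real \<Rightarrow> real \<Rightarrow> complex" and f g :: "real \<Rightarrow> complex"
  assumes "(\<lambda>(x, k). E x k) \<in> borel_measurable (lborel \<Otimes>\<^sub>M lborel)"
    and "\<And>x k. norm (E x k) \<le> 1" and "integrable lborel f" "integrable lborel g"
  shows "integrable lborel (\<lambda>x. f x * (LINT k|lborel. E x k * g k))"
  using lborel_pair.integrable_fst'[OF integrable_bounded_kernel_pair[OF assms]] by simp

lemma integral_swap_bounded_kernel:
  fixes E :: "real \<Rightarrow> real \<Rightarrow> complex" and f g :: "real \<Rightarrow> complex"
  assumes "(\<lambda>(x, k). E x k) \<in> borel_measurable (lborel \<Otimes>\<^sub>M lborel)"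
    and "\<And>x k. norm (E x k) \<le> 1" and "integrable lborel f" "integrable lborel g"
  shows "(LINT x|lborel. f x * (LINT k|lborel. E x k * g k))
       = (LINT k|lborel. g k * (LINT x|lborel. E x k * f x))"
proof -
  have "(LINT x|lborel. LINT k|lborel. f x * (E x k * g k))
      = (LINT k|lborel. LINT x|lborel. g k * (E x k * f x))"
    using lborel_pair.Fubini_integral[OF integrable_bounded_kernel_pair[OF assms]]
    by (simp add: mult_ac)
  then show ?thesis
    by (simp only: integral_mult_right_zero)
qed

lemma nn_integral_translated_kernel:
  fixes K :: "real \<Rightarrow> real"
  assumes [measurable]: "K \<in> borel_measurable borel"
    and K_nonneg: "\<And>u. 0 \<le> K u" and K_mass: "(\<integral>\<^sup>+u. K u \<partial>lborel) = 1" and c: "0 \<le> c"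
  shows "(\<integral>\<^sup>+k'. ennreal (c * K (k' - k)) \<partial>lborel) = ennreal c"
    and "(\<integral>\<^sup>+k. ennreal (c * K (k' - k)) \<partial>lborel) = ennreal c"
proof -
  have "(\<integral>\<^sup>+k'. ennreal (c * K (k' - k)) \<partial>lborel) = ennreal c * (\<integral>\<^sup>+k'. K (-k + 1 * k') \<partial>lborel)"
    using c K_nonneg by (simp add: ennreal_mult nn_integral_cmult)
  then show "(\<integral>\<^sup>+k'. ennreal (c * K (k' - k)) \<partial>lborel) = ennreal c"
    using nn_integral_real_affine[of "\<lambda>u. ennreal (K u)" 1 "-k"] K_mass by simp
  have "(\<integral>\<^sup>+k. ennreal (c * K (k' - k)) \<partial>lborel) = ennreal c * (\<integral>\<^sup>+k. K (k' + (-1) * k) \<partial>lborel)"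
    using c K_nonneg by (simp add: ennreal_mult nn_integral_cmult)
  then show "(\<integral>\<^sup>+k. ennreal (c * K (k' - k)) \<partial>lborel) = ennreal c"
    using nn_integral_real_affine[of "\<lambda>u. ennreal (K u)" "-1" k'] K_mass by simp
qed

lemma ennreal_mult_le_half_squares:
  fixes x y K :: real
  assumes "0 \<le> K"
  shows "ennreal (x * y * K) \<le> ennreal (x\<^sup>2 / 2 * K) + ennreal (y\<^sup>2 / 2 * K)"
proof -
  have "x * y * K \<le> x\<^sup>2 / 2 * K + y\<^sup>2 / 2 * K"
    using mult_right_mono[OF sum_squares_bound[of x y] assms] by (simp add: field_simps)
  then show ?thesis
    using assms by (simp add: ennreal_plus[symmetric] ennreal_leI del: ennreal_plus)
qed

lemma nn_integral_convolution_form_le: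
  fixes g :: "real \<Rightarrow> complex" and K :: "real \<Rightarrow> real"
  assumes [measurable]: "g \<in> borel_measurable borel" "K \<in> borel_measurable borel"
    and K_nonneg: "\<And>u. 0 \<le> K u" and K_mass: "(\<integral>\<^sup>+u. K u \<partial>lborel) = 1"
  shows "(\<integral>\<^sup>+k. \<integral>\<^sup>+k'. ennreal (cmod (g k) * cmod (g k') * K (k' - k)) \<partial>lborel \<partial>lborel)
      \<le> (\<integral>\<^sup>+k. (cmod (g k))\<^sup>2 \<partial>lborel)"
proof -
  let ?G = "\<lambda>k. ennreal ((cmod (g k))\<^sup>2 / 2)"
  note mass = nn_integral_translated_kernel[OF assms(2) K_nonneg K_mass]
  have half_sq_nonneg: "0 \<le> (cmod (g k))\<^sup>2 / 2" for k
    by simp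
  have "(\<integral>\<^sup>+k. \<integral>\<^sup>+k'. ennreal (cmod (g k) * cmod (g k') * K (k' - k)) \<partial>lborel \<partial>lborel)
      \<le> (\<integral>\<^sup>+k. \<integral>\<^sup>+k'. ennreal ((cmod (g k))\<^sup>2 / 2 * K (k' - k))
                         + ennreal ((cmod (g k'))\<^sup>2 / 2 * K (k' - k)) \<partial>lborel \<partial>lborel)"
    by (intro nn_integral_mono ennreal_mult_le_half_squares K_nonneg)
  also have "\<dots> = (\<integral>\<^sup>+k. \<integral>\<^sup>+k'. ennreal ((cmod (g k))\<^sup>2 / 2 * K (k' - k)) \<partial>lborel \<partial>lborel)
      + (\<integral>\<^sup>+k'. \<integral>\<^sup>+k. ennreal ((cmod (g k'))\<^sup>2 / 2 * K (k' - k)) \<partial>lborel \<partial>lborel)"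
    by (subst lborel_pair.Fubini'[symmetric], simp, subst nn_integral_add[symmetric])
      (auto intro!: nn_integral_cong nn_integral_add)
  also have "\<dots> = (\<integral>\<^sup>+k. ?G k + ?G k \<partial>lborel)"
    unfolding mass(1)[OF half_sq_nonneg] mass(2)[OF half_sq_nonneg]
    by (rule nn_integral_add[symmetric]) simp_all
  also have "\<dots> = (\<integral>\<^sup>+k. (cmod (g k))\<^sup>2 \<partial>lborel)"
    by (intro nn_integral_cong) (simp add: ennreal_plus[symmetric] del: ennreal_plus)
  finally show ?thesis .
qed

lemma norm_convolution_form_le:
  fixes g :: "real \<Rightarrow> complex" and K :: "real \<Rightarrow> real"
  assumes [measurable]: "g \<in> borel_measurable borel" "K \<in> borel_measurable borel"
    and K_nonneg: "\<And>u. 0 \<le> K u" and K_mass: "(\<integral>\<^sup>+u. K u \<partial>lborel) = 1"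
  shows "ennreal (cmod (LINT k|lborel. cnj (g k) * (LINT k'|lborel. g k' * K (k' - k))))
      \<le> (\<integral>\<^sup>+k. (cmod (g k))\<^sup>2 \<partial>lborel)"
proof -
  have inner: "ennreal (cmod (g k) * cmod (LINT k'|lborel. g k' * K (k' - k)))
      \<le> (\<integral>\<^sup>+k'. ennreal (cmod (g k) * cmod (g k') * K (k' - k)) \<partial>lborel)" for k
  proof -
    have "ennreal (cmod (g k) * cmod (LINT k'|lborel. g k' * K (k' - k)))
        = ennreal (cmod (g k)) * ennreal (cmod (LINT k'|lborel. g k' * K (k' - k)))"
      by (simp add: ennreal_mult)
    also have "\<dots> \<le> ennreal (cmod (g k)) * (\<integral>\<^sup>+k'. cmod (g k' * K (k' - k)) \<partial>lborel)"
      by (intro mult_left_mono norm_integral_le_nn_integral) simp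
    also have "\<dots> = (\<integral>\<^sup>+k'. ennreal (cmod (g k)) * ennreal (cmod (g k') * K (k' - k)) \<partial>lborel)"
      by (subst nn_integral_cmult[symmetric]) (simp_all add: norm_mult K_nonneg)
    also have "\<dots> = (\<integral>\<^sup>+k'. ennreal (cmod (g k) * cmod (g k') * K (k' - k)) \<partial>lborel)"
      by (intro nn_integral_cong) (simp add: K_nonneg ennreal_mult[symmetric] mult.assoc)
    finally show ?thesis .
  qed
  have "ennreal (cmod (LINT k|lborel. cnj (g k) * (LINT k'|lborel. g k' * K (k' - k))))
      \<le> (\<integral>\<^sup>+k. cmod (cnj (g k) * (LINT k'|lborel. g k' * K (k' - k))) \<partial>lborel)"
    by (rule norm_integral_le_nn_integral)
  also have "\<dots> \<le> (\<integral>\<^sup>+k. \<integral>\<^sup>+k'. ennreal (cmod (g k) * cmod (g k') * K (k' - k)) \<partial>lborel \<partial>lborel)"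
    by (intro nn_integral_mono) (simp add: norm_mult inner)
  also have "\<dots> \<le> (\<integral>\<^sup>+k. (cmod (g k))\<^sup>2 \<partial>lborel)"
    by (rule nn_integral_convolution_form_le) (use K_nonneg K_mass in auto)
  finally show ?thesis .
qed

section \<open>Gaussian damping and the Plancherel inequality\<close>

definition gauss_window :: "real \<Rightarrow> real \<Rightarrow> real" where
  "gauss_window R x = exp (-(x/R)\<^sup>2/2)"

lemma gauss_window_pos: "0 < gauss_window R x"
  by (simp add: gauss_window_def)

lemma borel_measurable_gauss_window[measurable]: "gauss_window R \<in> borel_measurable borel"
  unfolding gauss_window_def by measurable

lemma gauss_window_eq_normal_density:
  "0 < R \<Longrightarrow> gauss_window R x = R * sqrt (2*pi) * normal_density 0 R x"
  by (simp add: gauss_window_def normal_density_def power_divide real_sqrt_mult)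

lemma integrable_gauss_window:
  assumes "0 < R" shows "integrable lborel (gauss_window R)"
proof -
  have "gauss_window R = (\<lambda>x. (R * sqrt (2*pi)) * normal_density 0 R x)"
    using assms by (simp add: gauss_window_eq_normal_density fun_eq_iff)
  then show ?thesis
    using assms by simp
qed

lemma gauss_window_mono: "0 < R \<Longrightarrow> R \<le> R' \<Longrightarrow> gauss_window R x \<le> gauss_window R' x"
  unfolding gauss_window_def
  by (simp add: power_divide frac_le divide_left_mono)

lemma gauss_window_tendsto_1: "(\<lambda>n. gauss_window (real (Suc n)) x) \<longlonglongrightarrow> 1"
proof -
  have "(\<lambda>n. x / real (Suc n)) \<longlonglongrightarrow> 0"
    using tendsto_mult_right_zero[OF LIMSEQ_inverse_real_of_nat, of x] by (simp add: divide_inverse)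
  then have "(\<lambda>n. exp (-(x / real (Suc n))\<^sup>2/2)) \<longlonglongrightarrow> exp (-0\<^sup>2/2)"
    by (intro tendsto_intros) simp_all
  then show ?thesis
    by (simp add: gauss_window_def)
qed

lemma fourier_gauss_window:
  assumes R: "0 < R"
  shows "(LINT x|lborel. exp (\<i> * complex_of_real (u*x)) * gauss_window R x)
       = complex_of_real (2*pi * normal_density 0 (1/R) u)"
proof -
  have std: "(LINT y|lborel. std_normal_density y *\<^sub>R exp (\<i> * complex_of_real ((u*R)*y)))
      = complex_of_real (exp (-(u*R)\<^sup>2/2))"
  proof -
    have "char std_normal_distribution (u*R)
        = (LINT y|lborel. std_normal_density y *\<^sub>R exp (\<i> * complex_of_real ((u*R)*y)))"
      unfolding char_def by (subst integral_density) auto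
    then show ?thesis
      by (simp add: char_std_normal_distribution)
  qed
  have "(LINT x|lborel. exp (\<i> * complex_of_real (u*x)) * gauss_window R x)
      = \<bar>R\<bar> *\<^sub>R (LINT y|lborel. exp (\<i> * complex_of_real (u*(0+R*y))) * gauss_window R (0+R*y))"
    using R by (intro lborel_integral_real_affine) simp
  also have "\<dots> = R *\<^sub>R (LINT y|lborel. sqrt (2*pi)
      * (std_normal_density y *\<^sub>R exp (\<i> * complex_of_real ((u*R)*y))))"
    using R by (intro arg_cong2[where f=scaleR] Bochner_Integration.integral_cong)
      (auto simp: gauss_window_def std_normal_density_def scaleR_conv_of_real mult_ac)
  also have "\<dots> = R *\<^sub>R (complex_of_real (sqrt (2*pi)) * complex_of_real (exp (-(u*R)\<^sup>2/2)))"
    by (simp only: integral_mult_right_zero std)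
  also have "\<dots> = complex_of_real (2*pi * normal_density 0 (1/R) u)"
  proof -
    have "sqrt (2*pi) * sqrt (2*pi) = 2*pi"
      by simp
    then have "2*pi * normal_density 0 (1/R) u = R * (sqrt (2*pi) * exp (-(u*R)\<^sup>2/2))"
      using R by (simp add: normal_density_def real_sqrt_divide field_simps)
    then show ?thesis
      by (simp add: scaleR_conv_of_real)
  qed
  finally show ?thesis .
qed

definition fourier_integral :: "(real \<Rightarrow> complex) \<Rightarrow> real \<Rightarrow> complex" where
  "fourier_integral g x = (LINT k|lborel. exp (\<i> * complex_of_real (k*x)) * g k)"

lemma Phi_adj_eq_fourier_integral:
  "Phi_adj g x = complex_of_real ((2*pi) powr (-1/2)) * fourier_integral g x"
  by (simp add: Phi_adj_def fourier_integral_def)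

lemma borel_measurable_fourier_integral[measurable]:
  assumes [measurable]: "g \<in> borel_measurable borel"
  shows "fourier_integral g \<in> borel_measurable borel"
  unfolding fourier_integral_def by measurable

lemma borel_measurable_Phi_adj[measurable]:
  assumes [measurable]: "g \<in> borel_measurable borel"
  shows "Phi_adj g \<in> borel_measurable borel"
  unfolding Phi_adj_eq_fourier_integral[abs_def] by measurable

lemma norm_fourier_integral_le: "cmod (fourier_integral g x) \<le> (LINT k|lborel. cmod (g k))"
  unfolding fourier_integral_def by (rule order_trans[OF integral_norm_bound]) (simp add: norm_mult)

lemma cnj_fourier_integral:
  "cnj (fourier_integral g x) = (LINT k|lborel. exp (\<i> * complex_of_real (-k*x)) * cnj (g k))"
proof -
  have "cnj (fourier_integral g x) = (LINT k|lborel. cnj (exp (\<i> * complex_of_real (k*x)) * g k))"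
    unfolding fourier_integral_def by (rule Bochner_Integration.integral_cnj[symmetric])
  also have "\<dots> = (LINT k|lborel. exp (\<i> * complex_of_real (-k*x)) * cnj (g k))"
    by (simp add: exp_cnj)
  finally show ?thesis .
qed

lemma integrable_gauss_window_mult_fourier_integral:
  fixes g :: "real \<Rightarrow> complex"
  assumes g: "integrable lborel g" and R: "0 < R"
  shows "integrable lborel (\<lambda>x. gauss_window R x * fourier_integral g x)"
proof (rule Bochner_Integration.integrable_bound)
  have [measurable]: "g \<in> borel_measurable borel"
    using g by simp
  show "integrable lborel (\<lambda>x. gauss_window R x * (LINT k|lborel. cmod (g k)))"
    using integrable_gauss_window[OF R] by simp
  have "norm (gauss_window R x * fourier_integral g x)
      \<le> norm (gauss_window R x * (LINT k|lborel. cmod (g k)))" for x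
    using mult_left_mono[OF norm_fourier_integral_le, of "gauss_window R x" g x]
      gauss_window_pos[of R x]
    by (simp add: norm_mult abs_mult)
  then show "AE x in lborel. norm (gauss_window R x * fourier_integral g x)
      \<le> norm (gauss_window R x * (LINT k|lborel. cmod (g k)))"
    by simp
qed (use g in simp)

lemma fourier_gauss_window_mult_fourier_integral:
  fixes g :: "real \<Rightarrow> complex"
  assumes g: "integrable lborel g" and R: "0 < R"
  shows "(LINT x|lborel. exp (\<i> * complex_of_real (-k*x))
      * (gauss_window R x * fourier_integral g x))
      = 2*pi * (LINT k'|lborel. g k' * normal_density 0 (1/R) (k' - k))"
proof -
  define e where "e k x = exp (\<i> * complex_of_real (k*x))" for k x
  have [measurable]: "g \<in> borel_measurable borel"
      "(\<lambda>(x, k). e k x) \<in> borel_measurable (lborel \<Otimes>\<^sub>M lborel)"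
    using g unfolding e_def by auto
  have "integrable lborel (\<lambda>x. e (-k) x * gauss_window R x)"
    by (intro Bochner_Integration.integrable_bound[OF integrable_gauss_window[OF R]] AE_I2)
      (auto simp: norm_mult e_def)
  then have "(LINT x|lborel. (e (-k) x * gauss_window R x) * fourier_integral g x)
      = (LINT k'|lborel. g k' * (LINT x|lborel. e k' x * (e (-k) x * gauss_window R x)))"
    unfolding fourier_integral_def e_def[symmetric] using g
    by (intro integral_swap_bounded_kernel) (auto simp: e_def)
  also have "\<dots> = (LINT k'|lborel. 2*pi * (g k' * normal_density 0 (1/R) (k' - k)))"
  proof -
    have "(\<lambda>x. e k' x * (e (-k) x * gauss_window R x))
        = (\<lambda>x. exp (\<i> * complex_of_real ((k' - k)*x)) * gauss_window R x)" for k'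
      by (simp add: e_def fun_eq_iff exp_add[symmetric] algebra_simps)
    then have "(LINT x|lborel. e k' x * (e (-k) x * gauss_window R x))
        = 2*pi * normal_density 0 (1/R) (k' - k)" for k'
      using fourier_gauss_window[OF R, of "k' - k"] by simp
    then show ?thesis
      by (simp add: mult_ac)
  qed
  finally show ?thesis
    by (simp add: e_def mult.assoc integral_mult_right_zero[symmetric] del: integral_mult_right_zero)
qed

lemma Phi_adj_weighted_sq_integral:
  fixes g :: "real \<Rightarrow> complex"
  assumes g: "integrable lborel g" and R: "0 < R"
  shows "complex_of_real (LINT x|lborel. gauss_window R x * (cmod (Phi_adj g x))\<^sup>2)
       = (LINT k|lborel. cnj (g k) * (LINT k'|lborel. g k' * normal_density 0 (1/R) (k' - k)))"
proof -
  define F where "F = fourier_integral g"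
  define w where "w = gauss_window R"
  have [measurable]: "g \<in> borel_measurable borel"
    using g by simp
  have "complex_of_real (LINT x|lborel. w x * (cmod (Phi_adj g x))\<^sup>2)
      = (LINT x|lborel. w x * (Phi_adj g x * cnj (Phi_adj g x)))"
    by (simp add: complex_norm_square integral_complex_of_real[symmetric] del: of_real_power)
  also have "\<dots> = (LINT x|lborel. 1/(2*pi) * ((w x * F x) * cnj (F x)))"
  proof -
    define c where "c = complex_of_real ((2*pi) powr (-1/2))"
    have c2: "c * c = 1/(2*pi)"
      unfolding c_def of_real_mult[symmetric] by (simp add: powr_add[symmetric] powr_minus_divide)
    have "Phi_adj g x * cnj (Phi_adj g x) = (c * c) * (F x * cnj (F x))" for x
      unfolding Phi_adj_eq_fourier_integral F_def c_def by (simp add: mult_ac)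
    then show ?thesis
      unfolding c2 by (simp add: mult_ac)
  qed
  also have "\<dots> = 1/(2*pi) * (LINT x|lborel. (w x * F x) *
      (LINT k|lborel. exp (\<i> * complex_of_real (-k*x)) * cnj (g k)))"
    by (simp only: integral_mult_right_zero F_def cnj_fourier_integral)
  also have "\<dots> = 1/(2*pi) * (LINT k|lborel. cnj (g k) *
      (LINT x|lborel. exp (\<i> * complex_of_real (-k*x)) * (w x * F x)))"
    using integrable_gauss_window_mult_fourier_integral[OF g R] g
    by (subst integral_swap_bounded_kernel) (auto simp: F_def w_def)
  also have "\<dots> = (LINT k|lborel. cnj (g k)
      * (LINT k'|lborel. g k' * normal_density 0 (1/R) (k' - k)))"
    unfolding F_def w_def fourier_gauss_window_mult_fourier_integral[OF g R]
    by (simp add: mult.left_commute integral_mult_right_zero[symmetric] del: integral_mult_right_zero)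
  finally show ?thesis
    by (simp add: w_def)
qed

lemma norm_Phi_adj_le: "cmod (Phi_adj g x) \<le> (LINT k|lborel. cmod (g k))"
proof -
  have "(2*pi) powr (-1/2) \<le> 1"
    using powr_mono[of "-1/2" 0 "2*pi"] pi_ge_two by simp
  then show ?thesis
    unfolding Phi_adj_eq_fourier_integral norm_mult norm_of_real
    by (intro order_trans[OF mult_left_le_one_le norm_fourier_integral_le]) simp_all
qed

lemma nn_integral_gauss_window_Phi_adj_le:
  fixes g :: "real \<Rightarrow> complex"
  assumes g: "integrable lborel g" and R: "0 < R"
  shows "(\<integral>\<^sup>+x. ennreal (gauss_window R x * (cmod (Phi_adj g x))\<^sup>2) \<partial>lborel)
      \<le> (\<integral>\<^sup>+k. (cmod (g k))\<^sup>2 \<partial>lborel)"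
proof -
  define N where "N = (LINT k|lborel. cmod (g k))"
  have [measurable]: "g \<in> borel_measurable borel"
    using g by simp
  have "integrable lborel (\<lambda>x. gauss_window R x * (cmod (Phi_adj g x))\<^sup>2)"
  proof (rule Bochner_Integration.integrable_bound[where f="\<lambda>x. gauss_window R x * N\<^sup>2"])
    show "integrable lborel (\<lambda>x. gauss_window R x * N\<^sup>2)"
      using integrable_gauss_window[OF R] by simp
    have "(cmod (Phi_adj g x))\<^sup>2 \<le> N\<^sup>2" for x
      unfolding N_def by (intro power_mono norm_Phi_adj_le g) simp
    then show "AE x in lborel. norm (gauss_window R x * (cmod (Phi_adj g x))\<^sup>2)
        \<le> norm (gauss_window R x * N\<^sup>2)"
      using gauss_window_pos[of R] by (intro AE_I2) (simp add: abs_mult mult_left_mono less_imp_le)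
  qed simp
  then have "(\<integral>\<^sup>+x. ennreal (gauss_window R x * (cmod (Phi_adj g x))\<^sup>2) \<partial>lborel)
      = ennreal (cmod (complex_of_real (LINT x|lborel. gauss_window R x * (cmod (Phi_adj g x))\<^sup>2)))"
    using gauss_window_pos[of R] by (simp add: nn_integral_eq_integral less_imp_le)
  also have "\<dots> = ennreal (cmod (LINT k|lborel. cnj (g k)
      * (LINT k'|lborel. g k' * normal_density 0 (1/R) (k' - k))))"
    by (simp only: Phi_adj_weighted_sq_integral[OF g R])
  also have "\<dots> \<le> (\<integral>\<^sup>+k. (cmod (g k))\<^sup>2 \<partial>lborel)"
    using R by (intro norm_convolution_form_le) (simp_all add: nn_integral_eq_integral)
  finally show ?thesis .
qed

theorem Phi_adj_plancherel_le:
  fixes g :: "real \<Rightarrow> complex"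
  assumes g: "integrable lborel g"
  shows "(\<integral>\<^sup>+x. (cmod (Phi_adj g x))\<^sup>2 \<partial>lborel) \<le> (\<integral>\<^sup>+k. (cmod (g k))\<^sup>2 \<partial>lborel)"
proof -
  have [measurable]: "g \<in> borel_measurable borel"
    using g by simp
  define f where "f n x = ennreal (gauss_window (real (Suc n)) x * (cmod (Phi_adj g x))\<^sup>2)" for n x
  have inc: "incseq f"
    unfolding f_def by (intro incseq_SucI le_funI ennreal_leI mult_right_mono gauss_window_mono) auto
  have sup: "(SUP n. f n x) = ennreal ((cmod (Phi_adj g x))\<^sup>2)" for x
  proof (rule LIMSEQ_unique)
    show "(\<lambda>n. f n x) \<longlonglongrightarrow> (SUP n. f n x)"
      using inc by (intro LIMSEQ_SUP) (auto simp: incseq_def le_fun_def)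
    show "(\<lambda>n. f n x) \<longlonglongrightarrow> ennreal ((cmod (Phi_adj g x))\<^sup>2)"
      using tendsto_mult[OF gauss_window_tendsto_1 tendsto_const, of x "(cmod (Phi_adj g x))\<^sup>2"]
      unfolding f_def by (intro tendsto_ennrealI) simp
  qed
  have "(\<integral>\<^sup>+x. (cmod (Phi_adj g x))\<^sup>2 \<partial>lborel) = (\<integral>\<^sup>+x. (SUP n. f n x) \<partial>lborel)"
    by (simp only: sup)
  also have "\<dots> = (SUP n. integral\<^sup>N lborel (f n))"
    by (rule nn_integral_monotone_convergence_SUP[OF inc]) (unfold f_def, measurable)
  also have "\<dots> \<le> (\<integral>\<^sup>+k. (cmod (g k))\<^sup>2 \<partial>lborel)"
    unfolding f_def by (intro SUP_least nn_integral_gauss_window_Phi_adj_le g) simp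
  finally show ?thesis .
qed

section \<open>Transforms with a \<open>C\<^sup>1\<close> kernel\<close>

lemma eq_plus_set_integral_derivative:
  fixes f f' :: "real \<Rightarrow> complex"
  assumes f'_cont: "continuous_on {a..b} f'"
    and f_deriv: "\<And>k. k \<in> {a..b} \<Longrightarrow> (f has_vector_derivative f' k) (at k within {a..b})"
    and k: "k \<in> {a..b}"
  shows "f k = f a + (LINT t:{a..k}|lborel. f' t)"
proof -
  have "(LINT t|lborel. indicator {a..k} t *\<^sub>R f' t) = f k - f a"
  proof (rule integral_FTC_atLeastAtMost)
    show "continuous_on {a..k} f'"
      using k by (auto intro: continuous_on_subset[OF f'_cont])
    show "(f has_vector_derivative f' t) (at t within {a..k})" if "a \<le> t" "t \<le> k" for t
      using k that by (intro has_vector_derivative_within_subset[OF f_deriv]) auto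
  qed (use k in auto)
  then show ?thesis
    by (simp add: set_lebesgue_integral_def)
qed

lemma integral_mult_by_parts:
  fixes f f' G :: "real \<Rightarrow> complex"
  assumes f'_cont: "continuous_on {a..b} f'"
    and f_deriv: "\<And>k. k \<in> {a..b} \<Longrightarrow> (f has_vector_derivative f' k) (at k within {a..b})"
    and G: "integrable lborel G" and G_supp: "\<And>k. k \<notin> {a..b} \<Longrightarrow> G k = 0"
  shows "(LINT k|lborel. f k * G k)
       = f a * (LINT k|lborel. G k) + (LINT t:{a..b}|lborel. f' t * (LINT k:{t..}|lborel. G k))"
proof -
  define D where "D t = indicator {a..b} t *\<^sub>R f' t" for t
  define E where "E k t = complex_of_real (indicator {t..} k)" for k t :: real
  have D: "integrable lborel D"
    using borel_integrable_atLeastAtMost'[OF f'_cont] unfolding set_integrable_def D_def[abs_def] .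
  have "(\<lambda>(k, t). E k t) \<in> borel_measurable (borel \<Otimes>\<^sub>M borel)"
    unfolding E_def indicator_def atLeast_iff by measurable
  then have [measurable]: "(\<lambda>(k, t). E k t) \<in> borel_measurable (lborel \<Otimes>\<^sub>M lborel)"
    by simp
  have norm_E: "norm (E k t) \<le> 1" for k t
    by (simp add: E_def indicator_def)
  have "f k * G k = f a * G k + G k * (LINT t|lborel. E k t * D t)" for k
  proof (cases "k \<in> {a..b}")
    case True
    have "(LINT t:{a..k}|lborel. f' t) = (LINT t|lborel. E k t * D t)"
      using True unfolding set_lebesgue_integral_def
      by (intro Bochner_Integration.integral_cong) (auto simp: E_def D_def indicator_def)
    then show ?thesis
      using eq_plus_set_integral_derivative[OF f'_cont f_deriv True] by (simp add: algebra_simps)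
  qed (simp add: G_supp)
  then have "(LINT k|lborel. f k * G k)
      = f a * (LINT k|lborel. G k) + (LINT k|lborel. G k * (LINT t|lborel. E k t * D t))"
    using G D norm_E by (simp add: integrable_bounded_kernel)
  also have "(LINT k|lborel. G k * (LINT t|lborel. E k t * D t))
      = (LINT t|lborel. D t * (LINT k|lborel. E k t * G k))"
    using G D norm_E by (intro integral_swap_bounded_kernel) auto
  also have "\<dots> = (LINT t:{a..b}|lborel. f' t * (LINT k:{t..}|lborel. G k))"
    by (simp add: set_lebesgue_integral_def D_def E_def scaleR_conv_of_real mult.assoc)
  finally show ?thesis .
qed

lemma borel_measurable_Phi_adj_tail[measurable]:
  fixes g :: "real \<Rightarrow> complex"
  assumes [measurable]: "g \<in> borel_measurable borel"
  shows "(\<lambda>(x, t). Phi_adj (\<lambda>k. indicator {t..} k *\<^sub>R g k) x) \<in> borel_measurable (borel \<Otimes>\<^sub>M borel)"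
  unfolding Phi_adj_def indicator_def atLeast_iff by measurable

lemma Psi_adj_by_parts:
  fixes \<theta> :: "real \<Rightarrow> real \<Rightarrow> complex" and \<theta>' g :: "real \<Rightarrow> complex"
  assumes cont: "continuous_on {a..b} \<theta>'"
    and deriv: "\<And>k. k \<in> {a..b} \<Longrightarrow> (\<theta> x has_vector_derivative \<theta>' k) (at k within {a..b})"
    and g: "integrable lborel g" and g_supp: "\<And>k. k \<notin> {a..b} \<Longrightarrow> g k = 0"
  shows "Psi_adj \<theta> g x = \<theta> x a * Phi_adj g x
      + (LINT t:{a..b}|lborel. \<theta>' t * Phi_adj (\<lambda>k. indicator {t..} k *\<^sub>R g k) x)"
proof -
  define c where "c = complex_of_real ((2*pi) powr (-1/2))"
  define e where "e k = exp (\<i> * complex_of_real (k*x))" for k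
  have eg: "integrable lborel (\<lambda>k. e k * g k)"
    using g by (intro Bochner_Integration.integrable_bound[OF g] AE_I2) (auto simp: e_def norm_mult)
  have tail: "Phi_adj (\<lambda>k. indicator {t..} k *\<^sub>R g k) x
      = c * (LINT k:{t..}|lborel. e k * g k)" for t
    by (simp add: Phi_adj_def c_def e_def set_lebesgue_integral_def mult_ac)
  have "Psi_adj \<theta> g x = c * (LINT k|lborel. \<theta> x k * (e k * g k))"
    by (simp add: Psi_adj_def c_def e_def mult_ac)
  also have "\<dots> = c * (\<theta> x a * (LINT k|lborel. e k * g k)
      + (LINT t:{a..b}|lborel. \<theta>' t * (LINT k:{t..}|lborel. e k * g k)))"
    using cont deriv eg g_supp by (subst integral_mult_by_parts) auto
  also have "\<dots> = \<theta> x a * Phi_adj g x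
      + (LINT t:{a..b}|lborel. \<theta>' t * Phi_adj (\<lambda>k. indicator {t..} k *\<^sub>R g k) x)"
    unfolding tail
    by (simp add: distrib_left Phi_adj_def c_def e_def mult_ac set_integral_mult_right[symmetric]
        del: set_integral_mult_right)
  finally show ?thesis .
qed

lemma norm_set_integral_mult_le:
  fixes f P :: "real \<Rightarrow> complex"
  assumes [measurable]: "P \<in> borel_measurable borel" "A \<in> sets borel"
    and f: "\<And>t. t \<in> A \<Longrightarrow> cmod (f t) \<le> M"
  shows "ennreal (cmod (LINT t:A|lborel. f t * P t)) \<le> ennreal M * (\<integral>\<^sup>+t\<in>A. cmod (P t) \<partial>lborel)"
proof -
  have "ennreal (cmod (LINT t:A|lborel. f t * P t))
      \<le> (\<integral>\<^sup>+t. cmod (indicator A t *\<^sub>R (f t * P t)) \<partial>lborel)"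
    unfolding set_lebesgue_integral_def by (rule norm_integral_le_nn_integral)
  also have "\<dots> \<le> (\<integral>\<^sup>+t. ennreal M * (ennreal (cmod (P t)) * indicator A t) \<partial>lborel)"
  proof (intro nn_integral_mono)
    fix t
    show "ennreal (cmod (indicator A t *\<^sub>R (f t * P t)))
        \<le> ennreal M * (ennreal (cmod (P t)) * indicator A t)"
    proof (cases "t \<in> A")
      case True
      then have "cmod (f t) * cmod (P t) \<le> M * cmod (P t)"
        by (intro mult_right_mono f) auto
      then show ?thesis
        using True by (simp add: norm_mult ennreal_mult''[symmetric] ennreal_leI)
    qed simp
  qed
  also have "\<dots> = ennreal M * (\<integral>\<^sup>+t\<in>A. cmod (P t) \<partial>lborel)"
    by (rule nn_integral_cmult) simp
  finally show ?thesis .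
qed

lemma norm_Psi_adj_le:
  fixes \<theta> :: "real \<Rightarrow> real \<Rightarrow> complex" and g :: "real \<Rightarrow> complex"
  assumes c1: "c1_norm_le (\<theta> x) a b M" and ab: "a \<le> b"
    and g: "integrable lborel g" and g_supp: "\<And>k. k \<notin> {a..b} \<Longrightarrow> g k = 0"
  shows "ennreal (cmod (Psi_adj \<theta> g x)) \<le> ennreal M * ennreal (cmod (Phi_adj g x))
      + ennreal M * (\<integral>\<^sup>+t\<in>{a..b}. cmod (Phi_adj (\<lambda>k. indicator {t..} k *\<^sub>R g k) x) \<partial>lborel)"
proof -
  obtain \<theta>' where cont: "continuous_on {a..b} \<theta>'"
    and deriv: "\<And>k. k \<in> {a..b} \<Longrightarrow> (\<theta> x has_vector_derivative \<theta>' k) (at k within {a..b})"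
    and bound: "\<And>k t. k \<in> {a..b} \<Longrightarrow> t \<in> {a..b} \<Longrightarrow> cmod (\<theta> x k) + cmod (\<theta>' t) \<le> M"
    using c1 unfolding c1_norm_le_def by blast
  have \<theta>_a: "cmod (\<theta> x a) \<le> M" and \<theta>'_le: "t \<in> {a..b} \<Longrightarrow> cmod (\<theta>' t) \<le> M" for t
    using bound[of a a] bound[of a t] ab by (smt (verit) atLeastAtMost_iff norm_ge_zero)+
  have [measurable]: "g \<in> borel_measurable borel"
    using g by simp
  define I where "I = (LINT t:{a..b}|lborel. \<theta>' t * Phi_adj (\<lambda>k. indicator {t..} k *\<^sub>R g k) x)"
  have "Psi_adj \<theta> g x = \<theta> x a * Phi_adj g x + I"
    unfolding I_def using cont deriv g g_supp by (rule Psi_adj_by_parts)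
  then have "ennreal (cmod (Psi_adj \<theta> g x))
      \<le> ennreal (cmod (\<theta> x a * Phi_adj g x)) + ennreal (cmod I)"
    by (simp add: norm_triangle_ineq ennreal_leI flip: ennreal_plus)
  also have "\<dots> \<le> ennreal M * ennreal (cmod (Phi_adj g x))
      + ennreal M * (\<integral>\<^sup>+t\<in>{a..b}. cmod (Phi_adj (\<lambda>k. indicator {t..} k *\<^sub>R g k) x) \<partial>lborel)"
  proof (rule add_mono)
    show "ennreal (cmod (\<theta> x a * Phi_adj g x)) \<le> ennreal M * ennreal (cmod (Phi_adj g x))"
      using \<theta>_a by (simp add: norm_mult ennreal_mult''[symmetric] mult_right_mono ennreal_leI)
    show "ennreal (cmod I) \<le> ennreal M
        * (\<integral>\<^sup>+t\<in>{a..b}. cmod (Phi_adj (\<lambda>k. indicator {t..} k *\<^sub>R g k) x) \<partial>lborel)"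
      unfolding I_def using measurable_Pair2[OF borel_measurable_Phi_adj_tail, of g x] \<theta>'_le
      by (intro norm_set_integral_mult_le) simp_all
  qed
  finally show ?thesis .
qed

lemma ennreal_sum_sq_le:
  fixes u v :: ennreal
  shows "(u + v)\<^sup>2 \<le> 2 * u\<^sup>2 + 2 * v\<^sup>2"
proof -
  have "(u + v)\<^sup>2 = u\<^sup>2 + v\<^sup>2 + 2 * u * v"
    by (rule power2_sum)
  also have "\<dots> \<le> u\<^sup>2 + v\<^sup>2 + (u\<^sup>2 + v\<^sup>2)"
    by (intro add_left_mono sum_of_squares_ge_ennreal)
  finally show ?thesis
    by (simp add: mult_2 algebra_simps)
qed

lemma nn_integral_interval_sq_le:
  fixes F :: "real \<Rightarrow> ennreal"
  assumes [measurable]: "F \<in> borel_measurable borel" and ab: "a \<le> b"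
  shows "(\<integral>\<^sup>+t\<in>{a..b}. F t \<partial>lborel)\<^sup>2 \<le> ennreal (b - a) * (\<integral>\<^sup>+t\<in>{a..b}. (F t)\<^sup>2 \<partial>lborel)"
proof -
  have "(\<integral>\<^sup>+t\<in>{a..b}. F t \<partial>lborel)\<^sup>2
      \<le> (\<integral>\<^sup>+t. (indicator {a..b} t)\<^sup>2 \<partial>lborel) * (\<integral>\<^sup>+t. (F t * indicator {a..b} t)\<^sup>2 \<partial>lborel)"
  proof -
    have "(\<integral>\<^sup>+t\<in>{a..b}. F t \<partial>lborel)
        = (\<integral>\<^sup>+t. indicator {a..b} t * (F t * indicator {a..b} t) \<partial>lborel)"
      by (intro nn_integral_cong) (simp split: split_indicator)
    then show ?thesis
      by (simp only:) (rule Cauchy_Schwarz_nn_integral; measurable)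
  qed
  also have "\<dots> = ennreal (b - a) * (\<integral>\<^sup>+t\<in>{a..b}. (F t)\<^sup>2 \<partial>lborel)"
  proof -
    have "(\<integral>\<^sup>+t. (indicator {a..b} t)\<^sup>2 \<partial>lborel) = (\<integral>\<^sup>+t. indicator {a..b} t \<partial>lborel)"
      by (intro nn_integral_cong) (simp split: split_indicator)
    moreover have "(\<integral>\<^sup>+t. (F t * indicator {a..b} t)\<^sup>2 \<partial>lborel) = (\<integral>\<^sup>+t\<in>{a..b}. (F t)\<^sup>2 \<partial>lborel)"
      by (intro nn_integral_cong) (simp split: split_indicator)
    ultimately show ?thesis
      using ab by simp
  qed
  finally show ?thesis .
qed


lemma ennreal_sq_Psi_adj_le:
  fixes \<theta> :: "real \<Rightarrow> real \<Rightarrow> complex" and g :: "real \<Rightarrow> complex"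
  assumes c1: "c1_norm_le (\<theta> x) a b M" and ab: "a \<le> b"
    and g: "integrable lborel g" and g_supp: "\<And>k. k \<notin> {a..b} \<Longrightarrow> g k = 0"
  shows "ennreal ((cmod (Psi_adj \<theta> g x))\<^sup>2) \<le> ennreal (2 * M\<^sup>2) * ennreal ((cmod (Phi_adj g x))\<^sup>2)
      + ennreal (2 * M\<^sup>2 * (b - a))
          * (\<integral>\<^sup>+t\<in>{a..b}. (cmod (Phi_adj (\<lambda>k. indicator {t..} k *\<^sub>R g k) x))\<^sup>2 \<partial>lborel)"
proof -
  have [measurable]: "g \<in> borel_measurable borel"
    using g by simp
  define A where "A = ennreal (cmod (Phi_adj g x))"
  define P where "P t = ennreal (cmod (Phi_adj (\<lambda>k. indicator {t..} k *\<^sub>R g k) x))" for t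
  have [measurable]: "P \<in> borel_measurable borel"
    unfolding P_def using measurable_Pair2[OF borel_measurable_Phi_adj_tail, of g x] by simp
  have "0 \<le> M"
    using c1 ab unfolding c1_norm_le_def by (smt (verit) atLeastAtMost_iff norm_ge_zero)
  have "ennreal ((cmod (Psi_adj \<theta> g x))\<^sup>2)
      \<le> (ennreal M * A + ennreal M * (\<integral>\<^sup>+t\<in>{a..b}. P t \<partial>lborel))\<^sup>2"
    unfolding A_def P_def ennreal_power[symmetric, OF norm_ge_zero]
    by (intro power_mono norm_Psi_adj_le[of \<theta> x a b M g, OF c1 ab g g_supp] zero_le)
  also have "\<dots> \<le> 2 * (ennreal M * A)\<^sup>2 + 2 * (ennreal M * (\<integral>\<^sup>+t\<in>{a..b}. P t \<partial>lborel))\<^sup>2"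
    by (rule ennreal_sum_sq_le)
  also have "\<dots> \<le> 2 * (ennreal M)\<^sup>2 * A\<^sup>2
      + 2 * (ennreal M)\<^sup>2 * (ennreal (b - a) * (\<integral>\<^sup>+t\<in>{a..b}. (P t)\<^sup>2 \<partial>lborel))"
    unfolding power_mult_distrib mult.assoc
    using ab by (intro add_left_mono mult_left_mono nn_integral_interval_sq_le) simp_all
  also have "\<dots> = ennreal (2 * M\<^sup>2) * ennreal ((cmod (Phi_adj g x))\<^sup>2)
      + ennreal (2 * M\<^sup>2 * (b - a))
          * (\<integral>\<^sup>+t\<in>{a..b}. (cmod (Phi_adj (\<lambda>k. indicator {t..} k *\<^sub>R g k) x))\<^sup>2 \<partial>lborel)"
    using \<open>0 \<le> M\<close> ab by (simp add: A_def P_def ennreal_mult ennreal_power mult.assoc)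
  finally show ?thesis .
qed

lemma nn_integral_Phi_adj_tail_sq_le:
  fixes g :: "real \<Rightarrow> complex"
  assumes g: "integrable lborel g" and ab: "a \<le> b"
  shows "(\<integral>\<^sup>+x. (\<integral>\<^sup>+t\<in>{a..b}. (cmod (Phi_adj (\<lambda>k. indicator {t..} k *\<^sub>R g k) x))\<^sup>2 \<partial>lborel) \<partial>lborel)
      \<le> ennreal (b - a) * (\<integral>\<^sup>+k. (cmod (g k))\<^sup>2 \<partial>lborel)"
proof -
  have [measurable]: "g \<in> borel_measurable borel"
    using g by simp
  define G where "G = (\<integral>\<^sup>+k. (cmod (g k))\<^sup>2 \<partial>lborel)"
  have "(\<integral>\<^sup>+x. (\<integral>\<^sup>+t\<in>{a..b}. (cmod (Phi_adj (\<lambda>k. indicator {t..} k *\<^sub>R g k) x))\<^sup>2 \<partial>lborel) \<partial>lborel)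
      = (\<integral>\<^sup>+t\<in>{a..b}. (\<integral>\<^sup>+x. (cmod (Phi_adj (\<lambda>k. indicator {t..} k *\<^sub>R g k) x))\<^sup>2 \<partial>lborel) \<partial>lborel)"
    using borel_measurable_Phi_adj_tail[of g]
    by (subst lborel_pair.Fubini') (simp_all add: nn_integral_multc case_prod_beta')
  also have "\<dots> \<le> (\<integral>\<^sup>+t\<in>{a..b}. G \<partial>lborel)"
  proof (intro nn_integral_mono mult_right_mono)
    fix t
    have "integrable lborel (\<lambda>k. indicator {t..} k *\<^sub>R g k)"
      using g by (rule integrable_mult_indicator[rotated]) simp
    then have "(\<integral>\<^sup>+x. (cmod (Phi_adj (\<lambda>k. indicator {t..} k *\<^sub>R g k) x))\<^sup>2 \<partial>lborel)
        \<le> (\<integral>\<^sup>+k. (cmod (indicator {t..} k *\<^sub>R g k))\<^sup>2 \<partial>lborel)"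
      by (rule Phi_adj_plancherel_le)
    also have "\<dots> \<le> G"
      unfolding G_def by (intro nn_integral_mono) (simp split: split_indicator)
    finally show "(\<integral>\<^sup>+x. (cmod (Phi_adj (\<lambda>k. indicator {t..} k *\<^sub>R g k) x))\<^sup>2 \<partial>lborel) \<le> G" .
  qed simp
  also have "\<dots> = ennreal (b - a) * G"
    using ab by (simp add: nn_integral_cmult_indicator mult.commute)
  finally show ?thesis
    unfolding G_def .
qed

lemma nn_integral_Psi_adj_sq_le:
  fixes \<theta> :: "real \<Rightarrow> real \<Rightarrow> complex" and g :: "real \<Rightarrow> complex"
  assumes c1: "AE x in lborel. c1_norm_le (\<theta> x) a b M" and ab: "a \<le> b"
    and g: "integrable lborel g" and g_supp: "\<And>k. k \<notin> {a..b} \<Longrightarrow> g k = 0"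
  shows "(\<integral>\<^sup>+x. (cmod (Psi_adj \<theta> g x))\<^sup>2 \<partial>lborel)
      \<le> ennreal (2 * M\<^sup>2 * (1 + (b - a)\<^sup>2)) * (\<integral>\<^sup>+k. (cmod (g k))\<^sup>2 \<partial>lborel)"
proof -
  have [measurable]: "g \<in> borel_measurable borel"
    using g by simp
  define G where "G = (\<integral>\<^sup>+k. (cmod (g k))\<^sup>2 \<partial>lborel)"
  define B where
    "B x = (\<integral>\<^sup>+t\<in>{a..b}. (cmod (Phi_adj (\<lambda>k. indicator {t..} k *\<^sub>R g k) x))\<^sup>2 \<partial>lborel)" for x
  have [measurable]: "B \<in> borel_measurable borel"
    unfolding B_def using borel_measurable_Phi_adj_tail[of g] by (simp add: case_prod_beta')
  have "(\<integral>\<^sup>+x. (cmod (Psi_adj \<theta> g x))\<^sup>2 \<partial>lborel)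
      \<le> (\<integral>\<^sup>+x. ennreal (2 * M\<^sup>2) * ennreal ((cmod (Phi_adj g x))\<^sup>2)
          + ennreal (2 * M\<^sup>2 * (b - a)) * B x \<partial>lborel)"
    unfolding B_def using ab g g_supp
    by (intro nn_integral_mono_AE AE_I2[THEN AE_mp[OF c1]] impI ennreal_sq_Psi_adj_le)
  also have "\<dots> = ennreal (2 * M\<^sup>2) * (\<integral>\<^sup>+x. (cmod (Phi_adj g x))\<^sup>2 \<partial>lborel)
      + ennreal (2 * M\<^sup>2 * (b - a)) * (\<integral>\<^sup>+x. B x \<partial>lborel)"
    by (subst nn_integral_add) (simp_all add: nn_integral_cmult)
  also have "\<dots> \<le> ennreal (2 * M\<^sup>2) * G + ennreal (2 * M\<^sup>2 * (b - a)) * (ennreal (b - a) * G)"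
    unfolding G_def B_def using Phi_adj_plancherel_le[OF g] nn_integral_Phi_adj_tail_sq_le[OF g ab]
    by (intro add_mono mult_left_mono zero_le)
  also have "\<dots> = ennreal (2 * M\<^sup>2 * (1 + (b - a)\<^sup>2)) * G"
  proof -
    have "ennreal (2 * M\<^sup>2 * (b - a)) * ennreal (b - a) = ennreal (2 * M\<^sup>2 * (b - a)\<^sup>2)"
      using ab by (subst ennreal_mult''[symmetric]) (simp_all add: power2_eq_square mult.assoc)
    moreover have "ennreal (2 * M\<^sup>2) + ennreal (2 * M\<^sup>2 * (b - a)\<^sup>2)
        = ennreal (2 * M\<^sup>2 * (1 + (b - a)\<^sup>2))"
      by (simp add: ennreal_plus[symmetric] distrib_left del: ennreal_plus)
    ultimately show ?thesis
      by (simp add: mult.assoc[symmetric] distrib_right[symmetric])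
  qed
  finally show ?thesis
    unfolding G_def .
qed

section \<open>The operator Psi* - [phi_k0] Phi*\<close>

lemma nn_integral_sq_eq_L2norm:
  assumes "sq_int h"
  shows "(\<integral>\<^sup>+x. (cmod (h x))\<^sup>2 \<partial>lborel) = ennreal ((L2norm h)\<^sup>2)"
  using assms unfolding sq_int_def L2norm_def by (simp add: nn_integral_eq_integral)

lemma sq_int_L2norm_le:
  assumes [measurable]: "D \<in> borel_measurable lborel"
    and le: "(\<integral>\<^sup>+x. (cmod (D x))\<^sup>2 \<partial>lborel) \<le> ennreal (K\<^sup>2)" and K: "0 \<le> K"
  shows "sq_int D \<and> L2norm D \<le> K"
proof
  have int: "integrable lborel (\<lambda>x. (cmod (D x))\<^sup>2)"
    using le by (intro integrableI_bounded) (simp_all add: le_less_trans)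
  then show "sq_int D"
    by (simp add: sq_int_def)
  then have "ennreal ((L2norm D)\<^sup>2) \<le> ennreal (K\<^sup>2)"
    using le by (simp add: nn_integral_sq_eq_L2norm)
  then show "L2norm D \<le> K"
    using K by (simp add: L2norm_def real_le_lsqrt)
qed

lemma integrable_of_sq_int_bounded_support:
  fixes u :: "real \<Rightarrow> complex"
  assumes "sq_int u" and supp: "\<And>k. k \<notin> {a..b} \<Longrightarrow> u k = 0"
  shows "integrable lborel u"
proof (rule Bochner_Integration.integrable_bound)
  show "integrable lborel (\<lambda>k. indicator {a..b} k + (cmod (u k))\<^sup>2)"
    using assms(1) unfolding sq_int_def by (intro Bochner_Integration.integrable_add)
        (auto simp: integrable_indicator_iff emeasure_lborel_Icc_eq)
  have "cmod (u k) \<le> indicator {a..b} k + (cmod (u k))\<^sup>2" for k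
  proof (cases "k \<in> {a..b}")
    case True
    have "cmod (u k) \<le> 1 + (cmod (u k))\<^sup>2"
      by (meson add_increasing add_increasing2 le_numeral_extra(1) linorder_le_cases pos2
          self_le_power zero_le_power2)
    then show ?thesis
      using True by simp
  qed (simp add: supp)
  then show "AE k in lborel. norm (u k) \<le> norm (indicator {a..b} k + (cmod (u k))\<^sup>2)"
    by (intro AE_I2) simp
qed (use assms(1) in \<open>simp add: sq_int_def\<close>)

lemma c1_norm_le_bound: "c1_norm_le f a b M \<Longrightarrow> k \<in> {a..b} \<Longrightarrow> cmod (f k) \<le> M"
  unfolding c1_norm_le_def by (smt (verit) norm_ge_zero)

lemma diff_op_eq_Psi_adj:
  fixes \<phi> \<theta> :: "real \<Rightarrow> real \<Rightarrow> complex" and \<phi>0 u :: "real \<Rightarrow> complex"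
  assumes dec: "\<And>k. \<bar>k - k0\<bar> \<le> \<kappa> \<Longrightarrow> \<phi> x k = \<phi>0 x + complex_of_real (k - k0) * \<theta> x k"
    and \<theta>_bound: "\<And>k. \<bar>k - k0\<bar> \<le> \<kappa> \<Longrightarrow> cmod (\<theta> x k) \<le> M"
    and \<theta>_meas: "\<theta> x \<in> borel_measurable borel"
    and u: "integrable lborel u" and u_supp: "\<And>k. \<kappa> < \<bar>k - k0\<bar> \<Longrightarrow> u k = 0"
  shows "diff_op \<phi> \<phi>0 u x = Psi_adj \<theta> (\<lambda>k. complex_of_real (k - k0) * u k) x"
proof -
  define e where "e k = exp (\<i> * complex_of_real (k*x))" for k
  have [measurable]: "u \<in> borel_measurable borel"
    using u by simp
  have pointwise: "e k * \<phi> x k * u k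
      = \<phi>0 x * (e k * u k) + e k * \<theta> x k * (complex_of_real (k - k0) * u k)" for k
    by (cases "\<bar>k - k0\<bar> \<le> \<kappa>") (simp_all add: dec u_supp algebra_simps)
  have "integrable lborel (\<lambda>k. e k * \<theta> x k * (complex_of_real (k - k0) * u k))"
  proof (rule Bochner_Integration.integrable_bound[where f="\<lambda>k. M * \<kappa> * cmod (u k)"])
    show "integrable lborel (\<lambda>k. M * \<kappa> * cmod (u k))"
      using u by simp
    have "cmod (e k * \<theta> x k * (complex_of_real (k - k0) * u k)) \<le> M * \<kappa> * cmod (u k)" for k
    proof (cases "\<bar>k - k0\<bar> \<le> \<kappa>")
      case True
      have "cmod (e k * \<theta> x k * (complex_of_real (k - k0) * u k))
          = cmod (\<theta> x k) * \<bar>k - k0\<bar> * cmod (u k)"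
        unfolding norm_mult norm_of_real by (simp add: e_def)
      also have "\<dots> \<le> M * \<kappa> * cmod (u k)"
        using \<theta>_bound[OF True] order_trans[OF norm_ge_zero \<theta>_bound[OF True]] True
        by (intro mult_right_mono mult_mono) auto
      finally show ?thesis .
    qed (simp add: u_supp)
    then show "AE k in lborel. norm (e k * \<theta> x k * (complex_of_real (k - k0) * u k))
        \<le> norm (M * \<kappa> * cmod (u k))"
      by (intro AE_I2) (simp add: order_trans[OF _ abs_ge_self])
  qed (use \<theta>_meas in \<open>simp add: e_def\<close>)
  moreover have "integrable lborel (\<lambda>k. \<phi>0 x * (e k * u k))"
    by (intro integrable_mult_right Bochner_Integration.integrable_bound[OF u] AE_I2)
        (auto simp: e_def norm_mult)
  ultimately have "(LINT k|lborel. e k * \<phi> x k * u k)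
      = \<phi>0 x * (LINT k|lborel. e k * u k)
          + (LINT k|lborel. e k * \<theta> x k * (complex_of_real (k - k0) * u k))"
    unfolding pointwise by simp
  then show ?thesis
    unfolding diff_op_def Psi_adj_def Phi_adj_def e_def[symmetric] by (simp add: algebra_simps)
qed

lemma integrable_mult_centered:
  fixes u :: "real \<Rightarrow> complex"
  assumes u: "integrable lborel u" and u_supp: "\<And>k. \<kappa> < \<bar>k - k0\<bar> \<Longrightarrow> u k = 0"
  shows "integrable lborel (\<lambda>k. complex_of_real (k - k0) * u k)"
proof (rule Bochner_Integration.integrable_bound[where f="\<lambda>k. \<kappa> * cmod (u k)"])
  show "integrable lborel (\<lambda>k. \<kappa> * cmod (u k))"
    using u by simp
  have "cmod (complex_of_real (k - k0) * u k) \<le> \<kappa> * cmod (u k)" for k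
  proof (cases "\<bar>k - k0\<bar> \<le> \<kappa>")
    case True
    then show ?thesis
      unfolding norm_mult norm_of_real by (intro mult_right_mono) simp_all
  qed (simp add: u_supp)
  then show "AE k in lborel. norm (complex_of_real (k - k0) * u k) \<le> norm (\<kappa> * cmod (u k))"
    by (intro AE_I2) (simp add: order_trans[OF _ abs_ge_self])
qed (use u in simp)

lemma AE_diff_op_eq_Psi_adj:
  fixes u :: "real \<Rightarrow> complex"
  assumes bd: "bloch_data k0 \<kappa> M \<phi> \<phi>0 \<theta>"
    and u: "integrable lborel u" and u_supp: "\<And>k. \<kappa> < \<bar>k - k0\<bar> \<Longrightarrow> u k = 0"
  shows "AE x in lborel. diff_op \<phi> \<phi>0 u x = Psi_adj \<theta> (\<lambda>k. complex_of_real (k - k0) * u k) x"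
proof -
  have [measurable]: "(\<lambda>(x, k). \<theta> x k) \<in> borel_measurable (lborel \<Otimes>\<^sub>M lborel)"
    and dec: "\<And>x k. \<bar>k - k0\<bar> \<le> \<kappa> \<Longrightarrow> \<phi> x k = \<phi>0 x + complex_of_real (k - k0) * \<theta> x k"
    and c1: "AE x in lborel. c1_norm_le (\<theta> x) (k0 - \<kappa>) (k0 + \<kappa>) M"
    using bd unfolding bloch_data_def by auto
  show ?thesis
  proof (rule AE_mp[OF c1], intro AE_I2 impI)
    fix x assume "c1_norm_le (\<theta> x) (k0 - \<kappa>) (k0 + \<kappa>) M"
    then show "diff_op \<phi> \<phi>0 u x = Psi_adj \<theta> (\<lambda>k. complex_of_real (k - k0) * u k) x"
      using u u_supp measurable_Pair2[of "\<lambda>(x, k). \<theta> x k" lborel lborel borel x]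
      by (intro diff_op_eq_Psi_adj[where M=M] dec) (auto simp: c1_norm_le_bound abs_le_iff)
  qed
qed

lemma nn_integral_sq_le_mult:
  fixes g h :: "real \<Rightarrow> complex"
  assumes [measurable]: "h \<in> borel_measurable borel" and gh: "\<And>k. cmod (g k) \<le> B * cmod (h k)"
  shows "(\<integral>\<^sup>+k. (cmod (g k))\<^sup>2 \<partial>lborel) \<le> ennreal (B\<^sup>2) * (\<integral>\<^sup>+k. (cmod (h k))\<^sup>2 \<partial>lborel)"
proof -
  have "(cmod (g k))\<^sup>2 \<le> B\<^sup>2 * (cmod (h k))\<^sup>2" for k
    using power_mono[OF gh norm_ge_zero, of k 2] by (simp add: power_mult_distrib)
  then have "(\<integral>\<^sup>+k. (cmod (g k))\<^sup>2 \<partial>lborel) \<le> (\<integral>\<^sup>+k. ennreal (B\<^sup>2) * (cmod (h k))\<^sup>2 \<partial>lborel)"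
    by (intro nn_integral_mono) (simp add: ennreal_mult''[symmetric] ennreal_leI)
  also have "\<dots> = ennreal (B\<^sup>2) * (\<integral>\<^sup>+k. (cmod (h k))\<^sup>2 \<partial>lborel)"
    by (rule nn_integral_cmult) simp
  finally show ?thesis .
qed

lemma nn_integral_diff_op_sq_le:
  fixes u :: "real \<Rightarrow> complex"
  assumes bd: "bloch_data k0 \<kappa> M \<phi> \<phi>0 \<theta>" and \<kappa>: "0 \<le> \<kappa>"
    and u: "integrable lborel u" and u_supp: "\<And>k. \<kappa> < \<bar>k - k0\<bar> \<Longrightarrow> u k = 0"
  shows "(\<integral>\<^sup>+x. (cmod (diff_op \<phi> \<phi>0 u x))\<^sup>2 \<partial>lborel)
      \<le> ennreal (2 * M\<^sup>2 * (1 + 4 * \<kappa>\<^sup>2))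
          * (\<integral>\<^sup>+k. (cmod (complex_of_real (k - k0) * u k))\<^sup>2 \<partial>lborel)"
proof -
  have c1: "AE x in lborel. c1_norm_le (\<theta> x) (k0 - \<kappa>) (k0 + \<kappa>) M"
    using bd unfolding bloch_data_def by auto
  have "(\<integral>\<^sup>+x. (cmod (diff_op \<phi> \<phi>0 u x))\<^sup>2 \<partial>lborel)
      = (\<integral>\<^sup>+x. (cmod (Psi_adj \<theta> (\<lambda>k. complex_of_real (k - k0) * u k) x))\<^sup>2 \<partial>lborel)"
    using AE_diff_op_eq_Psi_adj[OF bd u u_supp] by (intro nn_integral_cong_AE) auto
  also have "\<dots> \<le> ennreal (2 * M\<^sup>2 * (1 + ((k0 + \<kappa>) - (k0 - \<kappa>))\<^sup>2))
      * (\<integral>\<^sup>+k. (cmod (complex_of_real (k - k0) * u k))\<^sup>2 \<partial>lborel)"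
    using \<kappa> c1 integrable_mult_centered[of u \<kappa> k0, OF u u_supp]
    by (intro nn_integral_Psi_adj_sq_le) (auto simp: u_supp abs_le_iff)
  also have "((k0 + \<kappa>) - (k0 - \<kappa>))\<^sup>2 = 4 * \<kappa>\<^sup>2"
    by (simp add: power2_eq_square)
  finally show ?thesis .
qed

lemma diff_op_multiplier_estimate:
  fixes w :: "real \<Rightarrow> real" and h :: "real \<Rightarrow> complex"
  assumes bd: "bloch_data k0 \<kappa> M \<phi> \<phi>0 \<theta>" and \<kappa>: "0 \<le> \<kappa>"
    and [measurable]: "w \<in> borel_measurable borel"
    and w_supp: "\<And>k. \<kappa> < \<bar>k - k0\<bar> \<Longrightarrow> w k = 0"
    and w_bound: "\<And>k. \<bar>(k - k0) * w k\<bar> \<le> B"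
    and h: "sq_int h" and wh: "sq_int (\<lambda>k. w k * h k)"
  shows "sq_int (diff_op \<phi> \<phi>0 (\<lambda>k. w k * h k)) \<and>
    L2norm (diff_op \<phi> \<phi>0 (\<lambda>k. w k * h k)) \<le> sqrt (2 * (1 + 4 * \<kappa>\<^sup>2)) * \<bar>M\<bar> * B * L2norm h"
proof -
  define u where "u k = w k * h k" for k
  have [measurable]: "(\<lambda>(x, k). \<phi> x k) \<in> borel_measurable (lborel \<Otimes>\<^sub>M lborel)"
      "\<phi>0 \<in> borel_measurable lborel"
    using bd unfolding bloch_data_def by auto
  have [measurable]: "h \<in> borel_measurable borel"
    using h by (simp add: sq_int_def)
  have u_supp: "\<And>k. \<kappa> < \<bar>k - k0\<bar> \<Longrightarrow> u k = 0"
    by (simp add: u_def w_supp)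
  have u: "integrable lborel u"
    using wh unfolding u_def[symmetric]
    by (rule integrable_of_sq_int_bounded_support[where a="k0 - \<kappa>" and b="k0 + \<kappa>"])
      (auto intro!: u_supp)
  have "cmod (complex_of_real (k - k0) * u k) \<le> B * cmod (h k)" for k
    using mult_right_mono[OF w_bound[of k] norm_ge_zero[of "h k"]]
    unfolding u_def norm_mult norm_of_real by (simp add: abs_mult mult.assoc)
  then have "(\<integral>\<^sup>+k. (cmod (complex_of_real (k - k0) * u k))\<^sup>2 \<partial>lborel)
      \<le> ennreal (B\<^sup>2) * ennreal ((L2norm h)\<^sup>2)"
    using nn_integral_sq_le_mult[of h _ B] nn_integral_sq_eq_L2norm[OF h] by simp
  moreover have "(\<integral>\<^sup>+x. (cmod (diff_op \<phi> \<phi>0 u x))\<^sup>2 \<partial>lborel)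
      \<le> ennreal (2 * M\<^sup>2 * (1 + 4 * \<kappa>\<^sup>2))
          * (\<integral>\<^sup>+k. (cmod (complex_of_real (k - k0) * u k))\<^sup>2 \<partial>lborel)"
    using bd \<kappa> u u_supp by (rule nn_integral_diff_op_sq_le)
  ultimately have "(\<integral>\<^sup>+x. (cmod (diff_op \<phi> \<phi>0 u x))\<^sup>2 \<partial>lborel)
      \<le> ennreal (2 * M\<^sup>2 * (1 + 4 * \<kappa>\<^sup>2)) * (ennreal (B\<^sup>2) * ennreal ((L2norm h)\<^sup>2))"
    by (meson order_trans mult_left_mono zero_le)
  also have "\<dots> = ennreal ((sqrt (2 * (1 + 4 * \<kappa>\<^sup>2)) * \<bar>M\<bar> * B * L2norm h)\<^sup>2)"
    by (simp add: ennreal_mult[symmetric] power_mult_distrib mult_ac)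
  finally have "(\<integral>\<^sup>+x. (cmod (diff_op \<phi> \<phi>0 u x))\<^sup>2 \<partial>lborel)
      \<le> ennreal ((sqrt (2 * (1 + 4 * \<kappa>\<^sup>2)) * \<bar>M\<bar> * B * L2norm h)\<^sup>2)" .
  moreover have "0 \<le> B"
    using w_bound[of k0] by simp
  moreover have "diff_op \<phi> \<phi>0 u \<in> borel_measurable lborel"
    unfolding diff_op_def[abs_def] Psi_adj_def Phi_adj_def u_def by measurable
  ultimately show ?thesis
    unfolding u_def[symmetric] by (intro sq_int_L2norm_le) (auto simp: L2norm_def)
qed

section \<open>The two multipliers\<close>

lemma powr_ratio_le_1:
  fixes e \<rho> q :: real
  assumes "0 < e" "e \<le> \<rho>" "0 \<le> q"
  shows "e powr q * \<rho> powr (-q) \<le> 1"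
proof -
  have "e powr q * \<rho> powr (-q) \<le> e powr q * e powr (-q)"
    using assms by (intro mult_left_mono powr_mono2') auto
  also have "\<dots> = 1"
    using assms by (simp add: powr_add[symmetric])
  finally show ?thesis .
qed

lemma weight_bound_min_1:
  fixes t \<epsilon> \<rho> q \<kappa> :: real
  assumes t: "0 \<le> t" "t \<le> \<kappa>" "t \<le> \<rho>" and \<epsilon>: "0 < \<epsilon>" "\<epsilon> \<le> \<rho>" and q: "0 \<le> q"
  shows "t * (\<epsilon> powr q * \<rho> powr (-q)) \<le> (1 + \<kappa>) * \<epsilon> powr (min 1 q)"
proof (cases "1 \<le> q")
  case True
  have "t * (\<epsilon> powr q * \<rho> powr (-q)) \<le> \<epsilon> powr q * (\<rho> * \<rho> powr (-q))"
    using t by (simp add: mult_right_mono mult.left_commute)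
  also have "\<dots> = \<epsilon> powr q * \<rho> powr (1 - q)"
    using powr_add[of \<rho> 1 "-q"] \<epsilon> by simp
  also have "\<dots> \<le> \<epsilon> powr q * \<epsilon> powr (1 - q)"
    using True \<epsilon> by (intro mult_left_mono powr_mono2') auto
  also have "\<dots> = \<epsilon>"
    using \<epsilon> by (simp add: powr_add[symmetric])
  also have "\<dots> \<le> (1 + \<kappa>) * \<epsilon> powr (min 1 q)"
    using True \<epsilon> t by simp
  finally show ?thesis .
next
  case False
  show ?thesis
  proof (cases "t = 0")
    case False
    then have "0 < t"
      using t by simp
    have "t * (\<epsilon> powr q * \<rho> powr (-q)) \<le> t * (\<epsilon> powr q * t powr (-q))"
      using \<open>0 < t\<close> t q by (intro mult_left_mono powr_mono2') auto
    also have "\<dots> = \<epsilon> powr q * t powr (1 - q)"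
      using powr_add[of t 1 "-q"] \<open>0 < t\<close> by (simp add: mult_ac)
    also have "\<dots> \<le> \<epsilon> powr q * (1 + \<kappa>) powr 1"
      using \<open>\<not> 1 \<le> q\<close> t q by (intro mult_left_mono order_trans[OF powr_mono2 powr_mono]) auto
    finally show ?thesis
      using \<open>\<not> 1 \<le> q\<close> t by (simp add: mult.commute)
  qed (use t in simp)
qed

lemma weight_bound_min_0:
  fixes \<epsilon> \<rho> r \<kappa> :: real
  assumes \<epsilon>: "0 < \<epsilon>" "\<epsilon> \<le> \<rho>" and \<rho>: "\<rho> \<le> 1 + \<kappa>" and r: "-1 \<le> r" and \<kappa>: "0 \<le> \<kappa>"
  shows "\<epsilon> powr r * \<rho> powr (-r) \<le> (1 + \<kappa>) * \<epsilon> powr (min 0 r)"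
proof (cases "0 \<le> r")
  case True
  then show ?thesis
    using powr_ratio_le_1[OF \<epsilon> True] \<kappa> by simp
next
  case False
  have "\<rho> powr (-r) \<le> (1 + \<kappa>) powr (-r)"
    using False \<epsilon> \<rho> by (intro powr_mono2) auto
  also have "\<dots> \<le> (1 + \<kappa>) powr 1"
    using r \<kappa> by (intro powr_mono) auto
  finally have "\<epsilon> powr r * \<rho> powr (-r) \<le> \<epsilon> powr r * (1 + \<kappa>)"
    using \<kappa> by (intro mult_left_mono) simp_all
  then show ?thesis
    using False by (simp add: mult.commute)
qed

lemma powr_neg_half_eq_sqrt_powr: "0 \<le> s \<Longrightarrow> s powr (-q/2) = sqrt s powr (-q)"
  using powr_powr[of s "1/2" "-q"] powr_half_sqrt[of s] by simp

lemma cut1_eq: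
  "cut1 q \<epsilon> k0 \<kappa> k = \<epsilon> powr q * sqrt ((k - k0)\<^sup>2 + \<epsilon>\<^sup>2) powr (-q) * indicator {t. \<bar>t\<bar> \<le> \<kappa>} (k - k0)"
  unfolding cut1_def by (subst powr_neg_half_eq_sqrt_powr) simp_all

lemma cut2_eq:
  "cut2 r \<epsilon> k0 \<kappa> k = \<epsilon> powr r * sqrt ((k - k0)\<^sup>2 + \<epsilon>\<^sup>2) powr (-r) * inverse \<bar>k - k0\<bar>
      * indicator {t. \<bar>t\<bar> \<le> \<kappa>} (k - k0)"
  unfolding cut2_def by (subst powr_neg_half_eq_sqrt_powr) simp_all

lemma abs_cut1_le_1:
  assumes "0 \<le> q" "0 < \<epsilon>"
  shows "\<bar>cut1 q \<epsilon> k0 \<kappa> k\<bar> \<le> 1"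
  using powr_ratio_le_1[OF \<open>0 < \<epsilon>\<close> real_sqrt_sum_squares_ge2[of \<epsilon> "k - k0"] \<open>0 \<le> q\<close>]
  by (simp add: cut1_eq indicator_def abs_mult)

lemma abs_mult_cut1_le:
  assumes q: "0 \<le> q" and \<epsilon>: "0 < \<epsilon>" and \<kappa>: "0 \<le> \<kappa>"
  shows "\<bar>(k - k0) * cut1 q \<epsilon> k0 \<kappa> k\<bar> \<le> (1 + \<kappa>) * \<epsilon> powr (min 1 q)"
proof (cases "\<bar>k - k0\<bar> \<le> \<kappa>")
  case True
  define \<rho> where "\<rho> = sqrt (\<bar>k - k0\<bar>\<^sup>2 + \<epsilon>\<^sup>2)"
  have "\<bar>(k - k0) * cut1 q \<epsilon> k0 \<kappa> k\<bar> = \<bar>k - k0\<bar> * (\<epsilon> powr q * \<rho> powr (-q))"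
    using True by (simp add: cut1_eq \<rho>_def abs_mult)
  also have "\<dots> \<le> (1 + \<kappa>) * \<epsilon> powr (min 1 q)"
    using True q \<epsilon> unfolding \<rho>_def by (intro weight_bound_min_1) simp_all
  finally show ?thesis .
qed (use \<kappa> in \<open>simp add: cut1_def\<close>)

lemma abs_mult_cut2_le:
  assumes r: "-1 \<le> r" and \<epsilon>: "0 < \<epsilon>" "\<epsilon> \<le> 1" and \<kappa>: "0 \<le> \<kappa>"
  shows "\<bar>(k - k0) * cut2 r \<epsilon> k0 \<kappa> k\<bar> \<le> (1 + \<kappa>) * \<epsilon> powr (min 0 r)"
proof (cases "\<bar>k - k0\<bar> \<le> \<kappa> \<and> k \<noteq> k0")
  case True
  define \<rho> where "\<rho> = sqrt ((k - k0)\<^sup>2 + \<epsilon>\<^sup>2)"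
  have "\<bar>(k - k0) * cut2 r \<epsilon> k0 \<kappa> k\<bar> = \<epsilon> powr r * \<rho> powr (-r)"
    using True by (simp add: cut2_eq \<rho>_def abs_mult)
  also have "\<dots> \<le> (1 + \<kappa>) * \<epsilon> powr (min 0 r)"
  proof (rule weight_bound_min_0[OF \<epsilon>(1) _ _ r \<kappa>])
    show "\<epsilon> \<le> \<rho>"
      by (simp add: \<rho>_def)
    have "(k - k0)\<^sup>2 + \<epsilon>\<^sup>2 \<le> (1 + \<kappa>)\<^sup>2"
      using True \<epsilon> \<kappa> power_mono[of "\<bar>k - k0\<bar>" \<kappa> 2] power_le_one[of \<epsilon> 2]
      by (simp add: power2_sum)
    then show "\<rho> \<le> 1 + \<kappa>"
      using \<kappa> unfolding \<rho>_def by (simp add: real_sqrt_le_iff')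
  qed
  finally show ?thesis .
qed (use \<kappa> in \<open>auto simp: cut2_def\<close>)

lemma borel_measurable_cut1[measurable]: "cut1 q \<epsilon> k0 \<kappa> \<in> borel_measurable borel"
  unfolding cut1_def by measurable

lemma sq_int_cut1_mult:
  fixes h :: "real \<Rightarrow> complex"
  assumes "0 \<le> q" "0 < \<epsilon>" and h: "sq_int h"
  shows "sq_int (\<lambda>k. complex_of_real (cut1 q \<epsilon> k0 \<kappa> k) * h k)"
  unfolding sq_int_def
proof
  have [measurable]: "h \<in> borel_measurable borel"
    using h by (simp add: sq_int_def)
  show "(\<lambda>k. complex_of_real (cut1 q \<epsilon> k0 \<kappa> k) * h k) \<in> borel_measurable lborel"
    by simp
  show "integrable lborel (\<lambda>k. (cmod (complex_of_real (cut1 q \<epsilon> k0 \<kappa> k) * h k))\<^sup>2)"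
  proof (rule Bochner_Integration.integrable_bound)
    show "integrable lborel (\<lambda>k. (cmod (h k))\<^sup>2)"
      using h by (simp add: sq_int_def)
    have "\<bar>cut1 q \<epsilon> k0 \<kappa> k\<bar> * cmod (h k) \<le> cmod (h k)" for k
      using mult_right_mono[OF abs_cut1_le_1[OF assms(1,2)] norm_ge_zero[of "h k"]] by simp
    then show "AE k in lborel. norm ((cmod (complex_of_real (cut1 q \<epsilon> k0 \<kappa> k) * h k))\<^sup>2)
        \<le> norm ((cmod (h k))\<^sup>2)"
      by (intro AE_I2) (simp add: norm_mult power_mono)
  qed simp
qed

lemma diff_op_cut1_estimate:
  fixes h :: "real \<Rightarrow> complex"
  assumes "0 \<le> q" "0 \<le> \<kappa>" "bloch_data k0 \<kappa> M \<phi> \<phi>0 \<theta>" "0 < \<epsilon>" "sq_int h"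
  shows "sq_int (diff_op \<phi> \<phi>0 (\<lambda>k. complex_of_real (cut1 q \<epsilon> k0 \<kappa> k) * h k)) \<and>
    L2norm (diff_op \<phi> \<phi>0 (\<lambda>k. complex_of_real (cut1 q \<epsilon> k0 \<kappa> k) * h k))
      \<le> sqrt (2 * (1 + 4 * \<kappa>\<^sup>2)) * \<bar>M\<bar> * (1 + \<kappa>) * \<epsilon> powr (min 1 q) * L2norm h"
proof (subst mult.assoc[of _ "1 + \<kappa>"], rule diff_op_multiplier_estimate[OF assms(3,2)])
  show "\<bar>(k - k0) * cut1 q \<epsilon> k0 \<kappa> k\<bar> \<le> (1 + \<kappa>) * \<epsilon> powr (min 1 q)" for k
    using assms by (intro abs_mult_cut1_le) auto
  show "sq_int (\<lambda>k. complex_of_real (cut1 q \<epsilon> k0 \<kappa> k) * h k)"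
    using assms by (intro sq_int_cut1_mult) auto
qed (simp_all add: cut1_def assms)

lemma diff_op_cut2_estimate:
  fixes h :: "real \<Rightarrow> complex"
  assumes "-1 \<le> r" "0 \<le> \<kappa>" "bloch_data k0 \<kappa> M \<phi> \<phi>0 \<theta>" "0 < \<epsilon>" "\<epsilon> \<le> 1" "sq_int h"
    and "sq_int (\<lambda>k. complex_of_real (cut2 r \<epsilon> k0 \<kappa> k) * h k)"
  shows "sq_int (diff_op \<phi> \<phi>0 (\<lambda>k. complex_of_real (cut2 r \<epsilon> k0 \<kappa> k) * h k)) \<and>
    L2norm (diff_op \<phi> \<phi>0 (\<lambda>k. complex_of_real (cut2 r \<epsilon> k0 \<kappa> k) * h k))
      \<le> sqrt (2 * (1 + 4 * \<kappa>\<^sup>2)) * \<bar>M\<bar> * (1 + \<kappa>) * \<epsilon> powr (min 0 r) * L2norm h"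
proof (subst mult.assoc[of _ "1 + \<kappa>"], rule diff_op_multiplier_estimate[OF assms(3,2)])
  show "\<bar>(k - k0) * cut2 r \<epsilon> k0 \<kappa> k\<bar> \<le> (1 + \<kappa>) * \<epsilon> powr (min 0 r)" for k
    using assms by (intro abs_mult_cut2_le) auto
  show "sq_int (\<lambda>k. complex_of_real (cut2 r \<epsilon> k0 \<kappa> k) * h k)"
    by (fact assms(7))
qed (simp_all add: cut2_def assms)

theorem lemma1:
  shows "(\<forall>q::real. q \<ge> 0 \<longrightarrow> (\<forall>\<kappa>. 0 < \<kappa> \<and> \<kappa> < pi \<longrightarrow> (\<forall>M::real. \<exists>C::real.
            \<forall>k0 \<phi> \<phi>0 \<theta>. k0 \<in> {0, pi} \<and> bloch_data k0 \<kappa> M \<phi> \<phi>0 \<theta> \<longrightarrow>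
              (\<forall>\<epsilon>::real. 0 < \<epsilon> \<and> \<epsilon> \<le> 1 \<longrightarrow> (\<forall>h. sq_int h \<longrightarrow>
                 sq_int (diff_op \<phi> \<phi>0 (\<lambda>k. complex_of_real (cut1 q \<epsilon> k0 \<kappa> k) * h k)) \<and>
                 L2norm (diff_op \<phi> \<phi>0 (\<lambda>k. complex_of_real (cut1 q \<epsilon> k0 \<kappa> k) * h k))
                   \<le> C * \<epsilon> powr (min 1 q) * L2norm h)))))
   \<and> (\<forall>r::real. r \<ge> -1 \<longrightarrow> (\<forall>\<kappa>. 0 < \<kappa> \<and> \<kappa> < pi \<longrightarrow> (\<forall>M::real. \<exists>C::real.
            \<forall>k0 \<phi> \<phi>0 \<theta>. k0 \<in> {0, pi} \<and> bloch_data k0 \<kappa> M \<phi> \<phi>0 \<theta> \<longrightarrow>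
              (\<forall>\<epsilon>::real. 0 < \<epsilon> \<and> \<epsilon> \<le> 1 \<longrightarrow> (\<forall>h. sq_int h \<longrightarrow>
                 sq_int (\<lambda>k. complex_of_real (cut2 r \<epsilon> k0 \<kappa> k) * h k) \<longrightarrow>
                 sq_int (diff_op \<phi> \<phi>0 (\<lambda>k. complex_of_real (cut2 r \<epsilon> k0 \<kappa> k) * h k)) \<and>
                 L2norm (diff_op \<phi> \<phi>0 (\<lambda>k. complex_of_real (cut2 r \<epsilon> k0 \<kappa> k) * h k))
                   \<le> C * \<epsilon> powr (min 0 r) * L2norm h)))))"
  using diff_op_cut1_estimate[OF _ less_imp_le] diff_op_cut2_estimate[OF _ less_imp_le]
  by (intro conjI allI impI) blast+

end
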